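(* For every sequent $\Gamma\Rightarrow\Delta$: if $\Gamma\Rightarrow\Delta$ is provable in $\mathsf{Grz}_\infty$, then $\mathsf{Grz_{Seq}}\vdash\Gamma\Rightarrow\Delta$.
   Context: Formulas are built from $\bot$ and atomic propositions using $\to$ and $\Box$. A sequent is $\Gamma\Rightarrow\Delta$ with $\Gamma,\Delta$ finite multisets of formulas; $\Box\Pi$ denotes the multiset $\{\Box B:B\in\Pi\}$. Common rules: $(\to_L)$ from $\Gamma,B\Rightarrow\Delta$ and $\Gamma\Rightarrow A,\Delta$ infer $\Gamma,A\to B\Rightarrow\Delta$; $(\to_R)$ from $\Gamma,A\Rightarrow B,\Delta$ infer $\Gamma\Rightarrow A\to B,\Delta$; $(\mathsf{refl})$ from $\Gamma,B,\Box B\Rightarrow\Delta$ infer $\Gamma,\Box B\Rightarrow\Delta$. The finite-proof calculus $\mathsf{Grz_{Seq}}$ has initial sequents $\Gamma,A\Rightarrow A,\Delta$ (any $A$) and $\Gamma,\bot\Rightarrow\Delta$, the rules $(\to_L),(\to_R),(\mathsf{refl})$ and $(\Box_{\mathsf{Grz}})$: from $\Box\Pi,\Box(A\to\Box A)\Rightarrow A$ infer $\Gamma,\Box\Pi\Rightarrow\Box A,\Delta$. The calculus $\mathsf{Grz}_\infty$ has initial sequents $\Gamma,p\Rightarrow p,\Delta$ ($p$ atomic) and $\Gamma,\bot\Rightarrow\Delta$, the rules $(\to_L),(\to_R),(\mathsf{refl})$ and $(\Box)$: from left premise $\Gamma,\Box\Pi\Rightarrow A,\Delta$ and right premise $\Box\Pi\Rightarrow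 A$ infer $\Gamma,\Box\Pi\Rightarrow\Box A,\Delta$. Proofs in $\mathsf{Grz}_\infty$ are $\infty$-proofs: possibly infinite trees of sequents built by these rules, with leaves labelled by initial sequents, in which every infinite branch passes through a right premise of $(\Box)$ infinitely often; a sequent is provable if it labels the root of an $\infty$-proof. *)

theory Defs
  imports Main "HOL-Library.Multiset"
begin

datatype 'a fm = Bot | At 'a | Imp "'a fm" "'a fm" | Box "'a fm"

type_synonym 'a sequent = "'a fm multiset \<times> 'a fm multiset"

abbreviation boxes :: "'a fm multiset \<Rightarrow> 'a fm multiset" where
  "boxes \<Pi> \<equiv> image_mset Box \<Pi>"

inductive grz_seq :: "'a fm multiset \<Rightarrow> 'a fm multiset \<Rightarrow> bool" where
  ax: "grz_seq (add_mset A \<Gamma>) (add_mset A \<Delta>)"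
| bot: "grz_seq (add_mset Bot \<Gamma>) \<Delta>"
| impL: "grz_seq (add_mset B \<Gamma>) \<Delta> \<Longrightarrow> grz_seq \<Gamma> (add_mset A \<Delta>)
          \<Longrightarrow> grz_seq (add_mset (Imp A B) \<Gamma>) \<Delta>"
| impR: "grz_seq (add_mset A \<Gamma>) (add_mset B \<Delta>) \<Longrightarrow> grz_seq \<Gamma> (add_mset (Imp A B) \<Delta>)"
| refl: "grz_seq (add_mset B (add_mset (Box B) \<Gamma>)) \<Delta> \<Longrightarrow> grz_seq (add_mset (Box B) \<Gamma>) \<Delta>"
| boxGrz: "grz_seq (add_mset (Box (Imp A (Box A))) (boxes \<Pi>)) {#A#}
          \<Longrightarrow> grz_seq (\<Gamma> + boxes \<Pi>) (add_mset (Box A) \<Delta>)"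

text \<open>Rule labels and single inference steps of Grz_infinity:
  conclusion, rule, list of premises (for (Box): [left premise, right premise]).\<close>
datatype rule = RAx | RBot | RImpL | RImpR | RRefl | RBox

inductive inf_step :: "'a sequent \<Rightarrow> rule \<Rightarrow> 'a sequent list \<Rightarrow> bool" where
  "inf_step (add_mset (At p) \<Gamma>, add_mset (At p) \<Delta>) RAx []"
| "inf_step (add_mset Bot \<Gamma>, \<Delta>) RBot []"
| "inf_step (add_mset (Imp A B) \<Gamma>, \<Delta>) RImpL [(add_mset B \<Gamma>, \<Delta>), (\<Gamma>, add_mset A \<Delta>)]"
| "inf_step (\<Gamma>, add_mset (Imp A B) \<Delta>) RImpR [(add_mset A \<Gamma>, add_mset B \<Delta>)]"
| "inf_step (add_mset (Box B) \<Gamma>, \<Delta>) RRefl [(add_mset B (add_mset (Box B) \<Gamma>), \<Delta>)]"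
| "inf_step (\<Gamma> + boxes \<Pi>, add_mset (Box A) \<Delta>) RBox
     [(\<Gamma> + boxes \<Pi>, add_mset A \<Delta>), (boxes \<Pi>, {#A#})]"

text \<open>An infinity-proof: a (possibly infinite) tree with node set T (positions are lists of
  child indices, root []), node labels lab and rule labels rl, locally correct at every node,
  such that every infinite branch passes through a right premise of (Box) infinitely often.\<close>
definition inf_proof :: "nat list set \<Rightarrow> (nat list \<Rightarrow> 'a sequent) \<Rightarrow> (nat list \<Rightarrow> rule) \<Rightarrow> bool" where
  "inf_proof T lab rl \<longleftrightarrow>
     [] \<in> T \<and>
     (\<forall>w i. w @ [i] \<in> T \<longrightarrow> w \<in> T) \<and>
     (\<forall>w\<in>T. \<exists>ss. inf_step (lab w) (rl w) ss \<and>
                 (\<forall>i. w @ [i] \<in> T \<longleftrightarrow> i < length ss) \<and>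
                 (\<forall>i < length ss. lab (w @ [i]) = ss ! i)) \<and>
     (\<forall>f :: nat \<Rightarrow> nat list. f 0 = [] \<and> (\<forall>n. f (Suc n) \<in> T \<and> (\<exists>i. f (Suc n) = f n @ [i]))
        \<longrightarrow> (\<exists>\<^sub>\<infinity>n. rl (f n) = RBox \<and> f (Suc n) = f n @ [1]))"

definition grz_inf_provable :: "'a fm multiset \<Rightarrow> 'a fm multiset \<Rightarrow> bool" where
  "grz_inf_provable \<Gamma> \<Delta> \<longleftrightarrow> (\<exists>T lab rl. inf_proof T lab rl \<and> lab [] = (\<Gamma>, \<Delta>))"

end

(* All sequents of an infinity-proof lie in the finite set of subformulas of its root.  Strengthen
   the claim to: every node is Grz_Seq-provable together with any boxed context \<box>S, where S
   consists of formulas A \<rightarrow> \<box>A with \<box>A such a subformula.  Since every infinite branch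
   passes through right premises of (Box), the tree without those edges is well-founded, and we
   induct on it inside an induction on the number of such formulas missing from S.  At a right
   premise \<box>\<Pi> \<Rightarrow> A of (Box) for \<box>A, either A \<rightarrow> \<box>A is already in S, and then
   \<box>A follows from the left premise by reflexivity and (\<rightarrow>L), or adding it to S decreases the
   measure and the Grz rule applies. *)

theory Submission
  imports Defs
begin

fun subfms :: "'a fm \<Rightarrow> 'a fm set" where
  "subfms Bot = {Bot}"
| "subfms (At p) = {At p}"
| "subfms (Imp A B) = insert (Imp A B) (subfms A \<union> subfms B)"
| "subfms (Box A) = insert (Box A) (subfms A)"

lemma finite_subfms: "finite (subfms A)"
  by (induction A) auto

lemma subfms_refl [simp]: "A \<in> subfms A"
  by (cases A) auto

lemma subfms_trans: "B \<in> subfms A \<Longrightarrow> subfms B \<subseteq> subfms A"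
  by (induction A) auto

definition fms :: "'a sequent \<Rightarrow> 'a fm set" where
  "fms c = set_mset (fst c) \<union> set_mset (snd c)"

definition seq_subfms :: "'a sequent \<Rightarrow> 'a fm set" where
  "seq_subfms c = \<Union>(subfms ` fms c)"

lemma finite_seq_subfms: "finite (seq_subfms c)"
  by (simp add: seq_subfms_def fms_def finite_subfms)

lemma inf_step_premise_subfms:
  assumes "inf_step c r ss" "i < length ss"
  shows "fms (ss ! i) \<subseteq> seq_subfms c"
  using assms
proof cases
  case (3 A B \<Gamma> \<Delta>)
  with assms(2) have "i = 0 \<or> i = 1" by auto
  with 3 show ?thesis using subfms_refl[of A] subfms_refl[of B]
    by (fastforce simp: fms_def seq_subfms_def)
next
  case (4 \<Gamma> A B \<Delta>)
  with assms(2) show ?thesis using subfms_refl[of A] subfms_refl[of B]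
    by (fastforce simp: fms_def seq_subfms_def)
next
  case (5 B \<Gamma> \<Delta>)
  with assms(2) show ?thesis using subfms_refl[of B]
    by (fastforce simp: fms_def seq_subfms_def)
next
  case (6 \<Gamma> \<Pi> A \<Delta>)
  with assms(2) have "i = 0 \<or> i = 1" by auto
  with 6 show ?thesis using subfms_refl[of A]
    by (fastforce simp: fms_def seq_subfms_def)
qed auto

lemma inf_proof_prefix_closed:
  assumes "inf_proof T lab rl" "w @ v \<in> T"
  shows "w \<in> T"
  using assms(2)
proof (induction v rule: rev_induct)
  case (snoc i v)
  with assms(1) show ?case
    unfolding inf_proof_def by (metis append_assoc)
qed simp

lemma inf_proof_step:
  assumes "inf_proof T lab rl" "w \<in> T"
  obtains ss where "inf_step (lab w) (rl w) ss" "\<And>i. w @ [i] \<in> T \<longleftrightarrow> i < length ss"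
    "\<And>i. i < length ss \<Longrightarrow> lab (w @ [i]) = ss ! i"
  using assms unfolding inf_proof_def by blast

lemma inf_proof_subformula_property:
  assumes "inf_proof T lab rl" "w \<in> T"
  shows "fms (lab w) \<subseteq> seq_subfms (lab [])"
  using assms(2)
proof (induction w rule: rev_induct)
  case Nil
  show ?case by (auto simp: seq_subfms_def)
next
  case (snoc i w)
  have "w \<in> T"
    using inf_proof_prefix_closed[OF assms(1) snoc.prems] .
  then obtain ss where step: "inf_step (lab w) (rl w) ss"
    and "i < length ss" "lab (w @ [i]) = ss ! i"
    using inf_proof_step[OF assms(1)] snoc.prems by metis
  then have "fms (lab (w @ [i])) \<subseteq> seq_subfms (lab w)"
    using inf_step_premise_subfms by metis
  also have "\<dots> \<subseteq> seq_subfms (lab [])"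
    using snoc.IH[OF \<open>w \<in> T\<close>] subfms_trans by (fastforce simp: seq_subfms_def)
  finally show ?case .
qed

definition non_right_child :: "nat list set \<Rightarrow> (nat list \<Rightarrow> rule) \<Rightarrow> (nat list \<times> nat list) set" where
  "non_right_child T rl = {(w @ [i], w) | w i. w @ [i] \<in> T \<and> \<not> (rl w = RBox \<and> i = 1)}"

text \<open>An infinite path avoiding right premises of (Box), prefixed by the path from the root
  to its first node, would be a branch violating the global condition.\<close>
lemma wf_non_right_child:
  assumes ip: "inf_proof T lab rl"
  shows "wf (non_right_child T rl)"
  unfolding wf_iff_no_infinite_down_chain
proof
  assume "\<exists>f. \<forall>n. (f (Suc n), f n) \<in> non_right_child T rl"
  then obtain f where f: "\<And>n. (f (Suc n), f n) \<in> non_right_child T rl" by blast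
  then have f_child: "\<And>n. f n \<in> T \<and> (\<exists>i. f (Suc n) = f n @ [i])
      \<and> \<not> (rl (f n) = RBox \<and> f (Suc n) = f n @ [1])"
    unfolding non_right_child_def using inf_proof_prefix_closed[OF ip] by fastforce
  define m where "m = length (f 0)"
  define g where "g n = (if n \<le> m then take n (f 0) else f (n - m))" for n
  have g_shift: "g n = f (n - m)" "g (Suc n) = f (Suc (n - m))" if "n \<ge> m" for n
    using that by (auto simp: g_def m_def Suc_diff_le)
  have "g (Suc n) \<in> T \<and> (\<exists>i. g (Suc n) = g n @ [i])" for n
  proof (cases "n < m")
    case True
    have "take (Suc n) (f 0) \<in> T"
      using inf_proof_prefix_closed[OF ip, of _ "drop (Suc n) (f 0)"] f_child[of 0] by simp
    with True show ?thesis by (auto simp: g_def m_def take_Suc_conv_app_nth)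
  next
    case False
    then show ?thesis using g_shift[of n] f_child[of "Suc (n - m)"] f_child[of "n - m"] by simp
  qed
  moreover have "g 0 = []" by (simp add: g_def)
  ultimately have "\<exists>\<^sub>\<infinity>n. rl (g n) = RBox \<and> g (Suc n) = g n @ [1]"
    using ip unfolding inf_proof_def by blast
  then obtain n where "n \<ge> m" "rl (g n) = RBox \<and> g (Suc n) = g n @ [1]"
    by (auto simp: cofinite_eq_sequentially frequently_sequentially)
  with g_shift f_child show False by metis
qed

lemma grz_seq_weakenR: "grz_seq \<Gamma> \<Delta> \<Longrightarrow> grz_seq \<Gamma> (add_mset C \<Delta>)"
proof (induction rule: grz_seq.induct)
  case (impR A \<Gamma> B \<Delta>)
  then show ?case by (metis grz_seq.impR add_mset_commute)
next
  case (boxGrz A \<Pi> \<Gamma> \<Delta>)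
  then show ?case by (metis grz_seq.boxGrz add_mset_commute)
qed (auto intro: grz_seq.intros simp: add_mset_commute)

lemma grz_seq_rule_in_context:
  assumes "inf_step c r ss" "r \<noteq> RBox"
    and "\<And>i. i < length ss \<Longrightarrow> grz_seq (\<Theta> + fst (ss ! i)) (snd (ss ! i))"
  shows "grz_seq (\<Theta> + fst c) (snd c)"
  using assms
proof cases
  case (3 A B \<Gamma> \<Delta>)
  with assms(3)[of 0] assms(3)[of 1] show ?thesis by (simp add: grz_seq.impL)
next
  case (4 \<Gamma> A B \<Delta>)
  with assms(3)[of 0] show ?thesis by (simp add: grz_seq.impR)
next
  case (5 B \<Gamma> \<Delta>)
  with assms(3)[of 0] show ?thesis by (simp add: grz_seq.refl)
qed (auto intro: grz_seq.intros)

lemma grz_seq_box_from_boxed_imp: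
  assumes "grz_seq (add_mset (Box (Imp A (Box A))) \<Theta>) (add_mset A \<Delta>)"
  shows "grz_seq (add_mset (Box (Imp A (Box A))) \<Theta>) (add_mset (Box A) \<Delta>)"
proof -
  let ?\<Theta> = "add_mset (Box (Imp A (Box A))) \<Theta>"
  have "grz_seq (add_mset (Box A) ?\<Theta>) (add_mset (Box A) \<Delta>)"
    by (rule grz_seq.ax)
  moreover have "grz_seq ?\<Theta> (add_mset A (add_mset (Box A) \<Delta>))"
    using grz_seq_weakenR[OF assms, of "Box A"] by (simp add: add_mset_commute)
  ultimately have "grz_seq (add_mset (Imp A (Box A)) ?\<Theta>) (add_mset (Box A) \<Delta>)"
    by (rule grz_seq.impL)
  then show ?thesis by (rule grz_seq.refl)
qed

lemma grz_seq_box_in_context: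
  assumes left: "grz_seq (boxes S + (\<Gamma> + boxes \<Pi>)) (add_mset A \<Delta>)"
    and right: "Imp A (Box A) \<in># S \<or> grz_seq (boxes (add_mset (Imp A (Box A)) S) + boxes \<Pi>) {#A#}"
  shows "grz_seq (boxes S + (\<Gamma> + boxes \<Pi>)) (add_mset (Box A) \<Delta>)"
  using right
proof
  assume "Imp A (Box A) \<in># S"
  then obtain S' where "S = add_mset (Imp A (Box A)) S'" by (meson multi_member_split)
  with left show ?thesis
    using grz_seq_box_from_boxed_imp[of A "boxes S' + (\<Gamma> + boxes \<Pi>)" \<Delta>] by simp
next
  assume "grz_seq (boxes (add_mset (Imp A (Box A)) S) + boxes \<Pi>) {#A#}"
  then have "grz_seq (add_mset (Box (Imp A (Box A))) (boxes (S + \<Pi>))) {#A#}"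
    by simp
  from grz_seq.boxGrz[OF this, of \<Gamma> \<Delta>] show ?thesis
    by (simp add: add.left_commute)
qed

definition box_imps :: "'a fm set \<Rightarrow> 'a fm set" where
  "box_imps R = {Imp A (Box A) | A. Box A \<in> R}"

lemma finite_box_imps: "finite R \<Longrightarrow> finite (box_imps R)"
proof -
  assume "finite R"
  moreover have "box_imps R = (\<lambda>A. Imp A (Box A)) ` (Box -` R)"
    by (auto simp: box_imps_def)
  ultimately show ?thesis
    by (metis finite_imageI finite_vimageI fm.inject(3) injI)
qed

lemma inf_proof_node_provable_in_context:
  assumes ip: "inf_proof T lab rl"
    and node_fms: "\<forall>w\<in>T. fms (lab w) \<subseteq> R" and "finite R"
  shows "w \<in> T \<Longrightarrow> set_mset S \<subseteq> box_imps R \<Longrightarrow> grz_seq (boxes S + fst (lab w)) (snd (lab w))"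
proof (induction "card (box_imps R - set_mset S)" arbitrary: S w rule: less_induct)
  case less
  from less.prems(1) show ?case
  proof (induction w rule: wf_induct_rule[OF wf_non_right_child[OF ip]])
    case (1 w)
    obtain ss where step: "inf_step (lab w) (rl w) ss"
      and child: "\<And>i. w @ [i] \<in> T \<longleftrightarrow> i < length ss"
      and lab: "\<And>i. i < length ss \<Longrightarrow> lab (w @ [i]) = ss ! i"
      using inf_proof_step[OF ip "1.prems"] by metis
    have non_right: "grz_seq (boxes S + fst (ss ! i)) (snd (ss ! i))"
      if "i < length ss" "\<not> (rl w = RBox \<and> i = 1)" for i
      using "1.IH"[of "w @ [i]"] that child lab by (auto simp: non_right_child_def)
    show ?case
    proof (cases "rl w = RBox")
      case False
      with step non_right show ?thesis by (blast intro: grz_seq_rule_in_context)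
    next
      case True
      with step obtain \<Gamma> \<Pi> A \<Delta> where w: "lab w = (\<Gamma> + boxes \<Pi>, add_mset (Box A) \<Delta>)"
        and ss: "ss = [(\<Gamma> + boxes \<Pi>, add_mset A \<Delta>), (boxes \<Pi>, {#A#})]"
        by (cases rule: inf_step.cases) auto
      define X where "X = Imp A (Box A)"
      have left: "grz_seq (boxes S + (\<Gamma> + boxes \<Pi>)) (add_mset A \<Delta>)"
        using non_right[of 0] ss by simp
      have "X \<in># S \<or> grz_seq (boxes (add_mset X S) + boxes \<Pi>) {#A#}"
      proof (cases "X \<in># S")
        case False
        have "Box A \<in> R" using node_fms "1.prems" w by (auto simp: fms_def)
        then have X: "X \<in> box_imps R" by (auto simp: box_imps_def X_def)
        with False have "box_imps R - set_mset (add_mset X S) \<subset> box_imps R - set_mset S"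
          by auto
        then have "card (box_imps R - set_mset (add_mset X S)) < card (box_imps R - set_mset S)"
          by (meson psubset_card_mono finite_Diff finite_box_imps \<open>finite R\<close>)
        then show ?thesis
          using less.hyps[of "add_mset X S" "w @ [1]"] X less.prems(2) child lab ss by simp
      qed simp
      with left w show ?thesis unfolding X_def by (simp add: grz_seq_box_in_context)
    qed
  qed
qed

theorem theorem3p6:
  fixes \<Gamma> \<Delta> :: "'a fm multiset"
  assumes "grz_inf_provable \<Gamma> \<Delta>"
  shows "grz_seq \<Gamma> \<Delta>"
proof -
  obtain T lab rl where ip: "inf_proof T lab rl" and root: "lab [] = (\<Gamma>, \<Delta>)"
    using assms unfolding grz_inf_provable_def by auto
  have "[] \<in> T" using ip by (simp add: inf_proof_def)
  moreover have "\<forall>w\<in>T. fms (lab w) \<subseteq> seq_subfms (lab [])"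
    using inf_proof_subformula_property[OF ip] by blast
  ultimately have "grz_seq (boxes {#} + fst (lab [])) (snd (lab []))"
    using inf_proof_node_provable_in_context[OF ip _ finite_seq_subfms, of "lab []" "[]" "{#}"]
    by simp
  with root show ?thesis by simp
qed

end
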